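(* Let $\mathbb{F}$ be a field and $n\geq 2$. The matrices $E_{hi}$ for $h\neq i$, $h,i=1,\dots,n$, together with the matrices $E_{hh}-E_{11}-E_{1h}+E_{h1}$ for $2\leq h\leq n$, form a basis of the Lie algebra $\mathfrak{sl}(n,\mathbb{F})$ of traceless $n\times n$ matrices, and each of these matrices has square zero.
   Context: $E_{ij}$ denotes the $n\times n$ matrix with $1$ in entry $(i,j)$ and $0$ elsewhere. *)

theory Defs
  imports "Jordan_Normal_Form.VS_Connect"
begin

text \<open>Matrix units: E n h i is the n x n matrix with 1 in entry (h,i) and 0 elsewhere
  (indices are 0-based, so the paper's index 1 is 0 here).\<close>
definition matrix_unit :: "nat \<Rightarrow> nat \<Rightarrow> nat \<Rightarrow> 'a :: field mat" where
  "matrix_unit n h i = mat n n (\<lambda>(r, c). if r = h \<and> c = i then 1 else 0)"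

definition mat_trace :: "'a :: field mat \<Rightarrow> 'a" where
  "mat_trace A = (\<Sum>i<dim_row A. A $$ (i, i))"

definition sl_carrier :: "nat \<Rightarrow> 'a :: field mat set" where
  "sl_carrier n = {A \<in> carrier_mat n n. mat_trace A = 0}"

definition sl_vs :: "'a :: field itself \<Rightarrow> nat \<Rightarrow> ('a, 'a mat) module" where
  "sl_vs ty n = (module_mat ty n n)\<lparr>carrier := sl_carrier n\<rparr>"

definition sl_square_zero_family :: "nat \<Rightarrow> 'a :: field mat set" where
  "sl_square_zero_family n =
     {matrix_unit n h i | h i. h < n \<and> i < n \<and> h \<noteq> i} \<union>
     {matrix_unit n h h - matrix_unit n 0 0 - matrix_unit n 0 h + matrix_unit n h 0 | h. 1 \<le> h \<and> h < n}"

end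

theory Submission
  imports Defs
begin

(* Every member of the family is a
   rank-one matrix u v^T with v^T u = 0: E_hi = e_h e_i^T for h ~= i, and
   E_hh - E_00 - E_0h + E_h0 = (e_h - e_0)(e_h + e_0)^T. Hence its trace v^T u and its square
   (v^T u) u v^T vanish. For the basis property, the functionals A |-> A_hh (h > 0) and
   A |-> A_hi + [h = 0] A_ii - [i = 0] A_hh (h ~= i) are dual to the family, and they
   determine a traceless matrix because A_00 is minus the sum of the other diagonal entries. *)

lemma mat_trace_add:
  "A \<in> carrier_mat n n \<Longrightarrow> B \<in> carrier_mat n n \<Longrightarrow> mat_trace (A + B) = mat_trace A + mat_trace B"
  unfolding mat_trace_def by (simp add: sum.distrib)

lemma mat_trace_smult: "A \<in> carrier_mat n n \<Longrightarrow> mat_trace (c \<cdot>\<^sub>m A) = c * mat_trace A"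
  unfolding mat_trace_def by (simp add: sum_distrib_left)

lemma mat_trace_zero [simp]: "mat_trace (0\<^sub>m n n :: 'a :: field mat) = 0"
  unfolding mat_trace_def by simp

lemma vectorspace_sl_vs: "vectorspace class_ring (sl_vs TYPE('a :: field) n)"
proof -
  interpret M: vectorspace "class_ring :: 'a ring" "module_mat TYPE('a) n n"
    by (rule matrix_vs)
  have "subspace class_ring (sl_carrier n) (module_mat TYPE('a) n n)"
    unfolding subspace_def submodule_def
    by (auto simp: matrix_vs M.module_axioms sl_carrier_def module_mat_simps class_ring_simps
        mat_trace_add mat_trace_smult)
  then show ?thesis
    unfolding sl_vs_def by (rule M.subspace_is_vs)
qed

interpretation sl: vectorspace "class_ring :: 'a :: field ring" "sl_vs TYPE('a) n"
  rewrites "carrier (sl_vs TYPE('a) n) = sl_carrier n"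
    and "add (sl_vs TYPE('a) n) = (+)"
    and "zero (sl_vs TYPE('a) n) = 0\<^sub>m n n"
    and "smult (sl_vs TYPE('a) n) = (\<cdot>\<^sub>m)"
    and "carrier (class_ring :: 'a ring) = UNIV"
    and "zero (class_ring :: 'a ring) = 0"
  for n
  by (rule vectorspace_sl_vs) (simp_all add: sl_vs_def module_mat_simps class_ring_simps)

lemma index_sl_lincomb:
  assumes "finite X" "X \<subseteq> sl_carrier n" "r < n" "c < n"
  shows "sl.lincomb n a X $$ (r, c) = (\<Sum>x\<in>X. a x * x $$ (r, c))"
  using assms(1,2)
proof (induction X rule: finite_induct)
  case empty
  then show ?case
    using assms(3,4) by (simp add: sl.lincomb_def)
next
  case (insert x X)
  then have "sl.lincomb n a (insert x X) = a x \<cdot>\<^sub>m x + sl.lincomb n a X"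
    using sl.lincomb_insert[of X n a x] by simp
  moreover have "x \<in> carrier_mat n n" "sl.lincomb n a X \<in> carrier_mat n n"
    using insert sl.lincomb_closed[of X n a] by (auto simp: sl_carrier_def)
  ultimately show ?case
    using insert assms(3,4) by simp
qed

definition outer_mat :: "nat \<Rightarrow> (nat \<Rightarrow> 'a) \<Rightarrow> (nat \<Rightarrow> 'a) \<Rightarrow> 'a :: comm_ring_1 mat" where
  "outer_mat n u v = mat n n (\<lambda>(r, c). u r * v c)"

lemma outer_mat_carrier [simp]: "outer_mat n u v \<in> carrier_mat n n"
  unfolding outer_mat_def by simp

lemma mat_trace_outer_mat: "mat_trace (outer_mat n u v :: 'a :: field mat) = (\<Sum>j<n. v j * u j)"
  unfolding mat_trace_def outer_mat_def by (simp add: mult.commute)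

lemma outer_mat_mult:
  "outer_mat n u v * outer_mat n u' v' = (\<Sum>j<n. v j * u' j) \<cdot>\<^sub>m outer_mat n u v'"
  by (rule eq_matI)
    (auto simp: outer_mat_def scalar_prod_def sum_distrib_left sum_distrib_right
      atLeast0LessThan ac_simps intro: sum.cong)

lemma outer_mat_square_eq_zero:
  assumes "(\<Sum>j<n. v j * u j) = 0"
  shows "outer_mat n u v * outer_mat n u v = 0\<^sub>m n n"
  unfolding outer_mat_mult assms by (rule eq_matI) (simp_all add: outer_mat_def)

lemma index_matrix_unit [simp]:
  "r < n \<Longrightarrow> c < n \<Longrightarrow> matrix_unit n h i $$ (r, c) = of_bool (r = h \<and> c = i)"
  unfolding matrix_unit_def by simp

lemma dim_matrix_unit [simp]:
  "dim_row (matrix_unit n h i) = n" "dim_col (matrix_unit n h i) = n"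
  unfolding matrix_unit_def by simp_all

definition square_zero_index :: "nat \<Rightarrow> (nat \<times> nat) set" where
  "square_zero_index n = {..<n} \<times> {..<n} - {(0, 0)}"

definition square_zero_mat :: "nat \<Rightarrow> nat \<times> nat \<Rightarrow> 'a :: field mat" where
  "square_zero_mat n = (\<lambda>(h, i). if h = i
     then matrix_unit n h h - matrix_unit n 0 0 - matrix_unit n 0 h + matrix_unit n h 0
     else matrix_unit n h i)"

lemma dim_square_zero_mat [simp]:
  "dim_row (square_zero_mat n p) = n" "dim_col (square_zero_mat n p) = n"
  unfolding square_zero_mat_def by (simp_all split: prod.split)

lemma index_square_zero_mat:
  assumes "r < n" "c < n"
  shows "square_zero_mat n (h, i) $$ (r, c) =
    (of_bool (r = h) - of_bool (h = i \<and> r = 0)) * (of_bool (c = i) + of_bool (h = i \<and> c = 0))"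
  using assms by (auto simp: square_zero_mat_def)

lemma sl_square_zero_family_eq:
  "sl_square_zero_family n = square_zero_mat n ` square_zero_index n"
proof (intro equalityI subsetI)
  fix A assume "A \<in> sl_square_zero_family n"
  then consider h i where "A = matrix_unit n h i" "h < n" "i < n" "h \<noteq> i"
    | h where "A = matrix_unit n h h - matrix_unit n 0 0 - matrix_unit n 0 h + matrix_unit n h 0"
        "1 \<le> h" "h < n"
    unfolding sl_square_zero_family_def by blast
  then show "A \<in> square_zero_mat n ` square_zero_index n"
  proof cases
    case (1 h i)
    then have "A = square_zero_mat n (h, i)" "(h, i) \<in> square_zero_index n"
      by (auto simp: square_zero_mat_def square_zero_index_def)
    then show ?thesis by blast
  next
    case (2 h)
    then have "A = square_zero_mat n (h, h)" "(h, h) \<in> square_zero_index n"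
      by (simp_all add: square_zero_mat_def square_zero_index_def)
    then show ?thesis by blast
  qed
next
  fix A assume "A \<in> square_zero_mat n ` square_zero_index n"
  then obtain h i where "A = square_zero_mat n (h, i)" "h < n" "i < n" "(h, i) \<noteq> (0, 0)"
    unfolding square_zero_index_def by blast
  then show "A \<in> sl_square_zero_family n"
    unfolding sl_square_zero_family_def square_zero_mat_def
    by (cases "h = i") (auto intro: Suc_leI)
qed

lemma square_zero_mat_as_outer_mat:
  assumes "h < n" "i < n"
  obtains u v where "square_zero_mat n (h, i) = outer_mat n u v" "(\<Sum>j<n. v j * u j) = (0 :: 'a :: field)"
proof
  let ?u = "\<lambda>j. of_bool (j = h) - of_bool (h = i \<and> j = 0) :: 'a"
  let ?v = "\<lambda>j. of_bool (j = i) + of_bool (h = i \<and> j = 0) :: 'a"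
  show "square_zero_mat n (h, i) = outer_mat n ?u ?v"
    by (rule eq_matI) (simp_all add: index_square_zero_mat outer_mat_def)
  show "(\<Sum>j<n. ?v j * ?u j) = 0"
    using assms by (cases "h = i") (auto simp: algebra_simps sum.distrib sum_subtractf)
qed

lemma square_zero_mat_in_sl_carrier:
  assumes "p \<in> square_zero_index n"
  shows "square_zero_mat n p \<in> (sl_carrier n :: 'a :: field mat set)"
proof -
  obtain h i where p: "p = (h, i)" "h < n" "i < n"
    using assms unfolding square_zero_index_def by auto
  obtain u v :: "nat \<Rightarrow> 'a" where "square_zero_mat n p = outer_mat n u v" "(\<Sum>j<n. v j * u j) = 0"
    using square_zero_mat_as_outer_mat[OF p(2,3)] unfolding p(1) .
  then show ?thesis
    by (simp add: sl_carrier_def mat_trace_outer_mat)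
qed

lemma square_zero_mat_square:
  assumes "h < n" "i < n"
  shows "square_zero_mat n (h, i) * square_zero_mat n (h, i) = (0\<^sub>m n n :: 'a :: field mat)"
proof -
  obtain u v :: "nat \<Rightarrow> 'a" where "square_zero_mat n (h, i) = outer_mat n u v" "(\<Sum>j<n. v j * u j) = 0"
    using square_zero_mat_as_outer_mat[OF assms] .
  then show ?thesis
    by (simp add: outer_mat_square_eq_zero)
qed

definition square_zero_coord :: "'a :: field mat \<Rightarrow> nat \<times> nat \<Rightarrow> 'a" where
  "square_zero_coord A = (\<lambda>(h, i). if h = i then A $$ (h, h)
     else A $$ (h, i) + of_bool (h = 0) * A $$ (i, i) - of_bool (i = 0) * A $$ (h, h))"

lemma square_zero_coord_square_zero_mat:
  assumes "p \<in> square_zero_index n" "q \<in> square_zero_index n"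
  shows "square_zero_coord (square_zero_mat n q) p = of_bool (p = q)"
proof -
  obtain h i h' i' where "p = (h, i)" "q = (h', i')"
    by force
  with assms show ?thesis
    by (auto simp: square_zero_index_def square_zero_coord_def index_square_zero_mat)
qed

lemma inj_on_square_zero_mat: "inj_on (square_zero_mat n :: _ \<Rightarrow> 'a :: field mat) (square_zero_index n)"
proof (rule inj_onI)
  fix p q assume p: "p \<in> square_zero_index n" and q: "q \<in> square_zero_index n"
    and eq: "(square_zero_mat n p :: 'a mat) = square_zero_mat n q"
  have "of_bool (p = q) = square_zero_coord (square_zero_mat n p :: 'a mat) p"
    unfolding eq by (rule square_zero_coord_square_zero_mat[OF p q, symmetric])
  also have "\<dots> = 1"
    using square_zero_coord_square_zero_mat[OF p p] by simp
  finally show "p = q"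
    by simp
qed

lemma square_zero_coord_sl_lincomb:
  assumes "finite X" "X \<subseteq> sl_carrier n" "p \<in> square_zero_index n"
  shows "square_zero_coord (sl.lincomb n a X) p = (\<Sum>x\<in>X. a x * square_zero_coord x p)"
proof -
  obtain h i where p: "p = (h, i)" "h < n" "i < n"
    using assms(3) unfolding square_zero_index_def by auto
  note entry = index_sl_lincomb[OF assms(1,2)]
  show ?thesis
    using p by (simp add: square_zero_coord_def entry sum.distrib sum_subtractf sum_distrib_left
        algebra_simps)
qed

lemma sl_carrier_eqI:
  assumes A: "A \<in> sl_carrier n" and B: "B \<in> sl_carrier n"
    and coord: "\<And>p. p \<in> square_zero_index n \<Longrightarrow> square_zero_coord A p = square_zero_coord B p"
  shows "A = B"
proof -
  have carrier: "A \<in> carrier_mat n n" "B \<in> carrier_mat n n"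
    and traceless: "mat_trace A = 0" "mat_trace B = 0"
    using A B by (simp_all add: sl_carrier_def)
  have diag: "A $$ (k, k) = B $$ (k, k)" if "0 < k" "k < n" for k
    using coord[of "(k, k)"] that by (simp add: square_zero_index_def square_zero_coord_def)
  have trace_split: "mat_trace M = M $$ (0, 0) + (\<Sum>k\<in>{..<n} - {0}. M $$ (k, k))"
    if "M \<in> carrier_mat n n" "0 < n" for M :: "'a mat"
    using that unfolding mat_trace_def by (simp add: sum.remove)
  have diag0: "A $$ (0, 0) = B $$ (0, 0)" if "0 < n"
  proof -
    have "(\<Sum>k\<in>{..<n} - {0}. A $$ (k, k)) = (\<Sum>k\<in>{..<n} - {0}. B $$ (k, k))"
      using diag by (intro sum.cong) auto
    then show ?thesis
      using traceless trace_split[OF carrier(1) that] trace_split[OF carrier(2) that]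
      by (metis add_right_cancel)
  qed
  have diag_all: "A $$ (k, k) = B $$ (k, k)" if "k < n" for k
    using diag diag0 that by (cases "k = 0") auto
  have off_diag: "A $$ (h, i) = B $$ (h, i)" if "h < n" "i < n" "h \<noteq> i" for h i
  proof -
    from that have "(h, i) \<in> square_zero_index n"
      by (auto simp: square_zero_index_def)
    then show ?thesis
      using coord[of "(h, i)"] diag_all[of h] diag_all[of i] that by (simp add: square_zero_coord_def)
  qed
  show ?thesis
  proof (rule eq_matI)
    fix h i assume "h < dim_row B" "i < dim_col B"
    then show "A $$ (h, i) = B $$ (h, i)"
      using carrier diag_all off_diag by (cases "h = i") auto
  qed (use carrier in auto)
qed

lemma finite_square_zero_index [simp]: "finite (square_zero_index n)"
  unfolding square_zero_index_def by simp

lemma square_zero_mat_image_subset: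
  "square_zero_mat n ` square_zero_index n \<subseteq> (sl_carrier n :: 'a :: field mat set)"
  using square_zero_mat_in_sl_carrier by blast

lemma square_zero_coord_sl_lincomb_square_zero_mat:
  assumes "p \<in> square_zero_index n"
  shows "square_zero_coord (sl.lincomb n a (square_zero_mat n ` square_zero_index n)) p
    = a (square_zero_mat n p :: 'a :: field mat)"
proof -
  let ?I = "square_zero_index n" and ?B = "square_zero_mat n :: _ \<Rightarrow> 'a mat"
  have "square_zero_coord (sl.lincomb n a (?B ` ?I)) p = (\<Sum>q\<in>?I. a (?B q) * square_zero_coord (?B q) p)"
    by (simp add: square_zero_coord_sl_lincomb[OF _ square_zero_mat_image_subset assms]
        sum.reindex[OF inj_on_square_zero_mat])
  also have "\<dots> = (\<Sum>q\<in>?I. if q = p then a (?B q) else 0)"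
    by (rule sum.cong) (simp_all add: square_zero_coord_square_zero_mat assms)
  also have "\<dots> = a (?B p)"
    using assms by simp
  finally show ?thesis .
qed

lemma sl_lin_indpt_square_zero_mat:
  "sl.lin_indpt n (square_zero_mat n ` square_zero_index n :: 'a :: field mat set)"
proof (rule sl.finite_lin_indpt2[OF _ square_zero_mat_image_subset])
  fix a assume zero: "sl.lincomb n a (square_zero_mat n ` square_zero_index n) = (0\<^sub>m n n :: 'a mat)"
  show "\<forall>v \<in> square_zero_mat n ` square_zero_index n. a v = 0"
  proof
    fix v :: "'a mat" assume "v \<in> square_zero_mat n ` square_zero_index n"
    then obtain h i where v: "v = square_zero_mat n (h, i)" and hi: "(h, i) \<in> square_zero_index n"
      by auto
    have "a v = square_zero_coord (0\<^sub>m n n) (h, i)"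
      unfolding v zero[symmetric] by (rule square_zero_coord_sl_lincomb_square_zero_mat[OF hi, symmetric])
    also have "\<dots> = 0"
      using hi by (auto simp: square_zero_index_def square_zero_coord_def)
    finally show "a v = 0" .
  qed
qed simp

lemma sl_span_square_zero_mat:
  "sl.span n (square_zero_mat n ` square_zero_index n) = (sl_carrier n :: 'a :: field mat set)"
proof (intro equalityI subsetI)
  let ?I = "square_zero_index n" and ?B = "square_zero_mat n :: _ \<Rightarrow> 'a mat"
  fix A :: "'a mat" assume A: "A \<in> sl_carrier n"
  define a where "a v = square_zero_coord A (the_inv_into ?I ?B v)" for v
  have "A = sl.lincomb n a (?B ` ?I)"
  proof (rule sl_carrier_eqI[OF A])
    show "sl.lincomb n a (?B ` ?I) \<in> sl_carrier n"
      using sl.lincomb_closed[OF square_zero_mat_image_subset] by simp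
    fix p assume "p \<in> ?I"
    then show "square_zero_coord A p = square_zero_coord (sl.lincomb n a (?B ` ?I)) p"
      by (simp add: square_zero_coord_sl_lincomb_square_zero_mat a_def
          the_inv_into_f_f[OF inj_on_square_zero_mat])
  qed
  moreover have "finite (?B ` ?I)"
    by simp
  ultimately show "A \<in> sl.span n (?B ` ?I)"
    using sl.finite_span[OF _ square_zero_mat_image_subset] by auto
qed (use sl.span_is_subset2[OF square_zero_mat_image_subset] in blast)

lemma sl_basis_square_zero_mat:
  "sl.basis n (square_zero_mat n ` square_zero_index n :: 'a :: field mat set)"
  unfolding sl.basis_def
  using sl_lin_indpt_square_zero_mat sl_span_square_zero_mat square_zero_mat_image_subset by blast

lemma card_square_zero_index: "0 < n \<Longrightarrow> card (square_zero_index n) = n\<^sup>2 - 1"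
  unfolding square_zero_index_def by (simp add: card_Diff_singleton power2_eq_square)

theorem proposition1:
  fixes n :: nat
  assumes "n \<ge> 2"
  shows "vectorspace.basis (class_ring :: 'a :: field ring) (sl_vs TYPE('a) n)
           (sl_square_zero_family n)
       \<and> card (sl_square_zero_family n :: 'a mat set) = n^2 - 1
       \<and> (\<forall>A \<in> (sl_square_zero_family n :: 'a mat set). A * A = 0\<^sub>m n n)"
proof (intro conjI ballI)
  show "vectorspace.basis class_ring (sl_vs TYPE('a) n) (sl_square_zero_family n)"
    unfolding sl_square_zero_family_eq by (rule sl_basis_square_zero_mat)
  show "card (sl_square_zero_family n :: 'a mat set) = n^2 - 1"
    using assms by (simp add: sl_square_zero_family_eq card_image inj_on_square_zero_mat
        card_square_zero_index)
  fix A :: "'a mat" assume "A \<in> sl_square_zero_family n"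
  then obtain h i where "A = square_zero_mat n (h, i)" "h < n" "i < n"
    unfolding sl_square_zero_family_eq square_zero_index_def by blast
  then show "A * A = 0\<^sub>m n n"
    by (simp add: square_zero_mat_square)
qed

end
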